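(* Let $\phi(w)=aw+b$ with $a>0$ and $b\in\mathbb{C}$, $\mathrm{Re}(b)\geq 0$, and suppose that either $a=1$ ($\phi$ is of parabolic type or the identity map) or $a\in(1,\infty)$ ($\phi$ is hyperbolic of type II). Then the composition operator $C_{\phi}f=f\circ\phi$ on $H^2(\mathbb{C}_{+})$ is neither positively expansive nor uniformly positively expansive.
   Context: $\mathbb{C}_{+}=\{w\in\mathbb{C}:\mathrm{Re}(w)>0\}$. $H^2(\mathbb{C}_{+})$ is the Hardy space of holomorphic $f$ on $\mathbb{C}_{+}$ with finite norm $\|f\|_2^2=\sup_{0<x<\infty}\frac{1}{\pi}\int_{-\infty}^{\infty}|f(x+iy)|^2\,dy$; $C_\phi$ is bounded on it. An operator $T$ on a Banach space $X$ with unit sphere $S_X$ is positively expansive if for every $z\in S_X$ there is $n\in\mathbb{N}$ with $\|T^nz\|\ge 2$, and uniformly positively expansive if there is $n\in\mathbb{N}$ with $\|T^nz\|\ge2$ for all $z\in S_X$. *)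

theory Defs
  imports "HOL-Analysis.Analysis"
begin

definition rhp :: "complex set" where
  "rhp = {w. Re w > 0}"

text \<open>Squared Hardy norm: sup over x>0 of (1/pi) times the integral over y of |f(x+iy)|^2
  (as an extended nonnegative real, so that finiteness is part of membership).\<close>
definition H2_norm2 :: "(complex \<Rightarrow> complex) \<Rightarrow> ennreal" where
  "H2_norm2 f = (SUP x\<in>{0<..}. ennreal (1 / pi) *
      (\<integral>\<^sup>+ y. ennreal ((cmod (f (Complex x y)))\<^sup>2) \<partial>lborel))"

definition H2 :: "(complex \<Rightarrow> complex) set" where
  "H2 = {f. f holomorphic_on rhp \<and> H2_norm2 f < \<infinity>}"

definition H2_norm :: "(complex \<Rightarrow> complex) \<Rightarrow> real" where
  "H2_norm f = sqrt (enn2real (H2_norm2 f))"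

definition comp_op :: "(complex \<Rightarrow> complex) \<Rightarrow> (complex \<Rightarrow> complex) \<Rightarrow> (complex \<Rightarrow> complex)" where
  "comp_op \<phi> f = f \<circ> \<phi>"

definition pos_expansive :: "'a set \<Rightarrow> ('a \<Rightarrow> real) \<Rightarrow> ('a \<Rightarrow> 'a) \<Rightarrow> bool" where
  "pos_expansive X N T \<longleftrightarrow> (\<forall>z\<in>X. N z = 1 \<longrightarrow> (\<exists>n::nat. n \<ge> 1 \<and> N ((T ^^ n) z) \<ge> 2))"

definition unif_pos_expansive :: "'a set \<Rightarrow> ('a \<Rightarrow> real) \<Rightarrow> ('a \<Rightarrow> 'a) \<Rightarrow> bool" where
  "unif_pos_expansive X N T \<longleftrightarrow> (\<exists>n::nat. n \<ge> 1 \<and> (\<forall>z\<in>X. N z = 1 \<longrightarrow> N ((T ^^ n) z) \<ge> 2))"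

end

theory Submission
  imports Defs "HOL-Probability.Sinc_Integral"
begin

text \<open>Write \<open>\<phi> w = a w + b\<close>. It maps the vertical line \<open>Re w = x\<close> into the line
  \<open>Re w = a x + Re b\<close>, and the substitution \<open>y \<mapsto> Im b + a y\<close> in the line integrals gives
  \<open>\<parallel>f \<circ> \<phi>\<parallel>\<^sup>2 \<le> \<parallel>f\<parallel>\<^sup>2 / a\<close>. For \<open>a \<ge> 1\<close> the operator \<open>C\<^sub>\<phi>\<close> is therefore a contraction of \<open>H\<^sup>2\<close>,
  so the orbit of a unit vector (a normalised \<open>1 / (w + 1)\<close>) never reaches norm 2.\<close>

lemma nonexpansive_not_pos_expansive:
  assumes maps: "\<And>x. x \<in> X \<Longrightarrow> T x \<in> X" and nonexp: "\<And>x. x \<in> X \<Longrightarrow> N (T x) \<le> N x"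
    and z: "z \<in> X" "N z = 1"
  shows "\<not> pos_expansive X N T \<and> \<not> unif_pos_expansive X N T"
proof -
  have orbit: "(T ^^ n) z \<in> X \<and> N ((T ^^ n) z) \<le> 1" for n
  proof (induction n)
    case (Suc n)
    then show ?case
      using maps nonexp by (auto intro: order_trans)
  qed (use z in simp)
  have "\<not> N ((T ^^ n) z) \<ge> 2" for n
    using orbit[of n] by auto
  then show ?thesis
    using z unfolding pos_expansive_def unif_pos_expansive_def by blast
qed

lemma rhp_slice_borel_measurable:
  assumes "continuous_on rhp f" and "x > 0"
  shows "(\<lambda>y. ennreal ((cmod (f (Complex x y)))\<^sup>2)) \<in> borel_measurable borel"
proof -
  have "continuous_on UNIV (\<lambda>y. f (Complex x y))"
    by (rule continuous_on_compose2[OF assms(1)])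
       (use assms(2) in \<open>auto simp: rhp_def intro!: continuous_intros\<close>)
  then have "continuous_on UNIV (\<lambda>y. (cmod (f (Complex x y)))\<^sup>2)"
    by (intro continuous_intros)
  then have "(\<lambda>y. (cmod (f (Complex x y)))\<^sup>2) \<in> borel_measurable borel"
    by (rule borel_measurable_continuous_onI)
  then show ?thesis
    by measurable
qed

lemma affine_image_rhp_subset:
  assumes "c > 0" and "Re d \<ge> 0"
  shows "(\<lambda>w. complex_of_real c * w + d) ` rhp \<subseteq> rhp"
  using assms by (auto simp: rhp_def intro!: add_pos_nonneg mult_pos_pos)

lemma H2_norm2_comp_affine_le:
  assumes f: "continuous_on rhp f" and c: "c > 0" and d: "Re d \<ge> 0"
  shows "H2_norm2 (f \<circ> (\<lambda>w. complex_of_real c * w + d)) \<le> ennreal (1 / c) * H2_norm2 f"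
  unfolding H2_norm2_def SUP_mult_left_ennreal
proof (rule SUP_least)
  fix x :: real assume "x \<in> {0<..}"
  define x' where "x' = c * x + Re d"
  have x': "x' > 0"
    using \<open>x \<in> {0<..}\<close> c d by (auto simp: x'_def intro!: add_pos_nonneg)
  define h where "h y = ennreal ((cmod (f (Complex x' y)))\<^sup>2)" for y
  have h: "h \<in> borel_measurable borel"
    unfolding h_def by (rule rhp_slice_borel_measurable[OF f x'])
  have "complex_of_real c * Complex x y + d = Complex x' (Im d + c * y)" for y
    by (simp add: complex_eq_iff x'_def)
  then have "(\<integral>\<^sup>+ y. ennreal ((cmod ((f \<circ> (\<lambda>w. complex_of_real c * w + d)) (Complex x y)))\<^sup>2) \<partial>lborel)
      = (\<integral>\<^sup>+ y. h (Im d + c * y) \<partial>lborel)"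
    by (simp add: h_def)
  also have "\<dots> = ennreal (1 / c) * (\<integral>\<^sup>+ y. h y \<partial>lborel)"
  proof -
    have "(\<integral>\<^sup>+ y. h y \<partial>lborel) = ennreal c * (\<integral>\<^sup>+ y. h (Im d + c * y) \<partial>lborel)"
      using nn_integral_real_affine[OF h, of c "Im d"] c by simp
    moreover have "ennreal (1 / c) * ennreal c = 1"
      using c by (simp flip: ennreal_mult)
    ultimately show ?thesis
      by (simp add: mult.assoc[symmetric])
  qed
  finally show "ennreal (1 / pi) * (\<integral>\<^sup>+ y. ennreal ((cmod ((f \<circ> (\<lambda>w. complex_of_real c * w + d)) (Complex x y)))\<^sup>2) \<partial>lborel)
     \<le> (SUP x\<in>{0<..}. ennreal (1 / c) * (ennreal (1 / pi) * (\<integral>\<^sup>+ y. ennreal ((cmod (f (Complex x y)))\<^sup>2) \<partial>lborel)))"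
    using x' by (intro SUP_upper2[of x']) (simp_all add: h_def mult.left_commute)
qed

lemma comp_op_affine_in_H2:
  assumes c: "c > 0" and d: "Re d \<ge> 0" and f: "f \<in> H2"
  shows "comp_op (\<lambda>w. complex_of_real c * w + d) f \<in> H2"
proof -
  have hol: "f holomorphic_on rhp" and fin: "H2_norm2 f < \<infinity>"
    using f by (auto simp: H2_def)
  have "comp_op (\<lambda>w. complex_of_real c * w + d) f holomorphic_on rhp"
    unfolding comp_op_def using hol affine_image_rhp_subset[OF c d]
    by (intro holomorphic_on_compose_gen holomorphic_intros) auto
  moreover have "H2_norm2 (comp_op (\<lambda>w. complex_of_real c * w + d) f) < \<infinity>"
    using H2_norm2_comp_affine_le[OF holomorphic_on_imp_continuous_on[OF hol] c d] fin
    by (simp add: comp_op_def ennreal_mult_less_top le_less_trans)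
  ultimately show ?thesis
    by (simp add: H2_def)
qed

lemma H2_norm_comp_op_affine_le:
  assumes c: "c \<ge> 1" and d: "Re d \<ge> 0" and f: "f \<in> H2"
  shows "H2_norm (comp_op (\<lambda>w. complex_of_real c * w + d) f) \<le> H2_norm f"
proof -
  have hol: "f holomorphic_on rhp" and fin: "H2_norm2 f < \<infinity>"
    using f by (auto simp: H2_def)
  have "H2_norm2 (comp_op (\<lambda>w. complex_of_real c * w + d) f) \<le> ennreal (1 / c) * H2_norm2 f"
    using H2_norm2_comp_affine_le[OF holomorphic_on_imp_continuous_on[OF hol], of c d] c d
    by (simp add: comp_op_def)
  also have "\<dots> \<le> H2_norm2 f"
  proof -
    have "ennreal (1 / c) \<le> 1"
      using c by simp
    then show ?thesis
      using mult_right_mono[of "ennreal (1 / c)" 1 "H2_norm2 f"] by simp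
  qed
  finally show ?thesis
    unfolding H2_norm_def using fin by (intro real_sqrt_le_mono enn2real_mono) auto
qed

lemma H2_norm2_cmult:
  assumes f: "continuous_on rhp f"
  shows "H2_norm2 (\<lambda>w. k * f w) = ennreal ((cmod k)\<^sup>2) * H2_norm2 f"
  unfolding H2_norm2_def SUP_mult_left_ennreal
proof (rule SUP_cong[OF refl])
  fix x :: real assume "x \<in> {0<..}"
  then have "(\<lambda>y. ennreal ((cmod (f (Complex x y)))\<^sup>2)) \<in> borel_measurable borel"
    by (intro rhp_slice_borel_measurable[OF f]) auto
  then have "(\<integral>\<^sup>+ y. ennreal ((cmod (k * f (Complex x y)))\<^sup>2) \<partial>lborel)
      = ennreal ((cmod k)\<^sup>2) * (\<integral>\<^sup>+ y. ennreal ((cmod (f (Complex x y)))\<^sup>2) \<partial>lborel)"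
    by (simp add: norm_mult power_mult_distrib ennreal_mult nn_integral_cmult)
  then show "ennreal (1 / pi) * (\<integral>\<^sup>+ y. ennreal ((cmod (k * f (Complex x y)))\<^sup>2) \<partial>lborel)
      = ennreal ((cmod k)\<^sup>2) * (ennreal (1 / pi) * (\<integral>\<^sup>+ y. ennreal ((cmod (f (Complex x y)))\<^sup>2) \<partial>lborel))"
    by (simp add: mult.left_commute)
qed

lemma cmod_inverse_shift_squared: "(cmod (1 / (Complex x y + 1)))\<^sup>2 = 1 / ((x + 1)\<^sup>2 + y\<^sup>2)"
proof -
  have "Complex x y + 1 = Complex (x + 1) y"
    by (simp add: complex_eq_iff)
  then show ?thesis
    by (simp add: norm_divide power_divide cmod_power2)
qed

lemma inverse_shift_in_H2: "(\<lambda>w. 1 / (w + 1)) \<in> H2"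
proof -
  have "(\<lambda>w. 1 / (w + 1)) holomorphic_on rhp"
    by (intro holomorphic_intros) (auto simp: rhp_def complex_eq_iff)
  moreover have "H2_norm2 (\<lambda>w. 1 / (w + 1)) < \<infinity>"
  proof -
    have "integrable lborel (\<lambda>y::real. inverse (1 + y\<^sup>2))"
      using integrable_inverse_1_plus_square by (simp add: set_integrable_def einterval_def)
    then have fin: "(\<integral>\<^sup>+ y. ennreal (inverse (1 + y\<^sup>2)) \<partial>lborel) < \<infinity>"
      using integrableD(2) by (fastforce simp: top.not_eq_extremum)
    have "H2_norm2 (\<lambda>w. 1 / (w + 1)) \<le> ennreal (1 / pi) * (\<integral>\<^sup>+ y. ennreal (inverse (1 + y\<^sup>2)) \<partial>lborel)"
      unfolding H2_norm2_def
    proof (intro SUP_least mult_left_mono nn_integral_mono ennreal_leI)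
      fix x y :: real assume "x \<in> {0<..}"
      then have "1 + y\<^sup>2 \<le> (x + 1)\<^sup>2 + y\<^sup>2"
        using one_le_power[of "x + 1" 2] by simp
      then show "(cmod (1 / (Complex x y + 1)))\<^sup>2 \<le> inverse (1 + y\<^sup>2)"
        unfolding cmod_inverse_shift_squared inverse_eq_divide
        by (intro divide_left_mono) (auto intro!: mult_pos_pos add_pos_nonneg)
    qed simp
    also have "\<dots> < \<infinity>"
      using fin by (simp add: ennreal_mult_less_top)
    finally show ?thesis .
  qed
  ultimately show ?thesis
    by (simp add: H2_def)
qed

lemma H2_norm2_inverse_shift_pos: "H2_norm2 (\<lambda>w. 1 / (w + 1)) > 0"
proof -
  have pointwise: "ennreal (1 / 5) * indicator {0..1} y \<le> ennreal ((cmod (1 / (Complex 1 y + 1)))\<^sup>2)" for y :: real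
  proof (cases "y \<in> {0..1}")
    case True
    then have "1 / 5 \<le> 1 / ((1 + 1)\<^sup>2 + y\<^sup>2)"
      using power_le_one[of y 2] by (simp add: divide_simps add_pos_nonneg)
    then show ?thesis
      using True by (simp add: cmod_inverse_shift_squared ennreal_leI)
  qed simp
  have "(\<integral>\<^sup>+ y. ennreal (1 / 5) * indicator {0..1::real} y \<partial>lborel)
      \<le> (\<integral>\<^sup>+ y. ennreal ((cmod (1 / (Complex 1 y + 1)))\<^sup>2) \<partial>lborel)"
    by (rule nn_integral_mono) (rule pointwise)
  then have "ennreal (1 / 5) \<le> (\<integral>\<^sup>+ y. ennreal ((cmod (1 / (Complex 1 y + 1)))\<^sup>2) \<partial>lborel)"
    by (simp add: nn_integral_cmult_indicator)
  then have "ennreal (1 / pi) * ennreal (1 / 5) \<le> H2_norm2 (\<lambda>w. 1 / (w + 1))"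
    unfolding H2_norm2_def by (intro SUP_upper2[of 1] mult_left_mono) auto
  moreover have "0 < ennreal (1 / pi) * ennreal (1 / 5)"
    by (simp add: ennreal_zero_less_mult_iff)
  ultimately show ?thesis
    by order
qed

lemma H2_unit_sphere_nonempty: "\<exists>z\<in>H2. H2_norm z = 1"
proof -
  define g :: "complex \<Rightarrow> complex" where "g = (\<lambda>w. 1 / (w + 1))"
  define N where "N = enn2real (H2_norm2 g)"
  have N: "H2_norm2 g = ennreal N" and "N > 0"
    using inverse_shift_in_H2 H2_norm2_inverse_shift_pos
    by (auto simp: N_def g_def H2_def less_top[symmetric] enn2real_positive_iff)
  define z where "z w = complex_of_real (1 / sqrt N) * g w" for w
  have holo: "g holomorphic_on rhp"
    using inverse_shift_in_H2 by (simp add: H2_def g_def)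
  have "(cmod (complex_of_real (1 / sqrt N)))\<^sup>2 = 1 / N"
    using \<open>N > 0\<close> by (simp add: norm_divide power_divide)
  then have "H2_norm2 z = ennreal (1 / N) * ennreal N"
    unfolding z_def N H2_norm2_cmult[OF holomorphic_on_imp_continuous_on[OF holo]] by simp
  also have "\<dots> = 1"
    using \<open>N > 0\<close> by (simp flip: ennreal_mult)
  finally have "H2_norm2 z = 1" .
  moreover have "z holomorphic_on rhp"
    unfolding z_def by (intro holomorphic_intros holo)
  ultimately show ?thesis
    by (intro bexI[of _ z]) (auto simp: H2_def H2_norm_def)
qed

theorem proposition3p4:
  fixes a :: real and b :: complex
  assumes "a > 0" and "Re b \<ge> 0" and "a = 1 \<or> a > 1"
  shows "\<not> pos_expansive H2 H2_norm (comp_op (\<lambda>w. complex_of_real a * w + b))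
       \<and> \<not> unif_pos_expansive H2 H2_norm (comp_op (\<lambda>w. complex_of_real a * w + b))"
proof -
  have "a \<ge> 1"
    using assms(3) by auto
  obtain z where "z \<in> H2" "H2_norm z = 1"
    using H2_unit_sphere_nonempty by blast
  then show ?thesis
    using comp_op_affine_in_H2[OF assms(1,2)] H2_norm_comp_op_affine_le[OF \<open>a \<ge> 1\<close> assms(2)]
    by (intro nonexpansive_not_pos_expansive)
qed

end
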